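(* Let $f\in\mathbb{C}[h]$, $n\in\mathbb{N}$ and $\dot z\in\mathbb{C}$ with $\dot z+f^{(n)}(-\dot z)=0$. (1) The formulas $yt^i=(\dot z+f^{(i)}(-\dot z))t^{i-1}$, $ht^i=f^{(i)}(-\dot z)t^i$, $xt^i=t^{i+1}$ for $i=0,1,\dots,n-1$ define an $\mathcal{H}(f)$-module structure $C_{\mathcal{H}(f)}(\dot z,n)$ on $\mathbb{C}[t]/(t^n)$ (with basis the classes of $1,t,\dots,t^{n-1}$; here $t^{-1}:=0$ and $t^n=0$). (2) $C_{\mathcal{H}(f)}(\dot z,n)$ is a simple $\mathcal{H}(f)$-module if and only if $\dot z+f^{(i)}(-\dot z)\neq 0$ for all $i=1,2,\dots,n-1$.
   Context: For $f(h)\in\mathbb{C}[h]$, $\mathcal{H}(f)$ is the unital associative $\mathbb{C}$-algebra generated by $x,y,h$ with relations $hx=xf(h)$, $yh=f(h)y$, $yx-xy=f(h)-h$. Iterates: $f^{(0)}(h)=h$, $f^{(1)}=f$, $f^{(i+1)}(h)=f(f^{(i)}(h))$. $\mathbb{N}$ denotes the positive integers. *)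

theory Defs
  imports "HOL-Computational_Algebra.Polynomial" "Jordan_Normal_Form.Matrix"
begin

primrec piter :: "complex poly \<Rightarrow> nat \<Rightarrow> complex poly" where
  "piter f 0 = [:0, 1:]"
| "piter f (Suc i) = pcompose f (piter f i)"

definition mat_poly :: "nat \<Rightarrow> complex poly \<Rightarrow> complex mat \<Rightarrow> complex mat" where
  "mat_poly n p A = foldr (\<lambda>i B. coeff p i \<cdot>\<^sub>m (A ^\<^sub>m i) + B) [0..<Suc (degree p)] (0\<^sub>m n n)"

(* A module over H(f) on C^n is given by operators X, Y, H (images of x, y, h)
   satisfying the defining relations hx = x f(h), yh = f(h) y, yx - xy = f(h) - h. *)
definition Hf_module :: "complex poly \<Rightarrow> nat \<Rightarrow> complex mat \<Rightarrow> complex mat \<Rightarrow> complex mat \<Rightarrow> bool" where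
  "Hf_module f n X Y H \<longleftrightarrow>
     X \<in> carrier_mat n n \<and> Y \<in> carrier_mat n n \<and> H \<in> carrier_mat n n \<and>
     H * X = X * mat_poly n f H \<and>
     Y * H = mat_poly n f H * Y \<and>
     Y * X - X * Y = mat_poly n f H - H"

(* submodules = subspaces of C^n invariant under the generators x, y, h *)
definition invariant_subspace :: "nat \<Rightarrow> complex mat \<Rightarrow> complex mat \<Rightarrow> complex mat \<Rightarrow> complex vec set \<Rightarrow> bool" where
  "invariant_subspace n X Y H W \<longleftrightarrow>
     W \<subseteq> carrier_vec n \<and> 0\<^sub>v n \<in> W \<and>
     (\<forall>u\<in>W. \<forall>v\<in>W. u + v \<in> W) \<and> (\<forall>c. \<forall>u\<in>W. c \<cdot>\<^sub>v u \<in> W) \<and>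
     (\<forall>u\<in>W. X *\<^sub>v u \<in> W \<and> Y *\<^sub>v u \<in> W \<and> H *\<^sub>v u \<in> W)"

definition simple_Hf_module :: "nat \<Rightarrow> complex mat \<Rightarrow> complex mat \<Rightarrow> complex mat \<Rightarrow> bool" where
  "simple_Hf_module n X Y H \<longleftrightarrow> n > 0 \<and>
     (\<forall>W. invariant_subspace n X Y H W \<longrightarrow> W = {0\<^sub>v n} \<or> W = carrier_vec n)"

(* Matrices of x, y, h on C[t]/(t^n) w.r.t. basis 1, t, ..., t^(n-1) (index j <-> t^j);
   column j is the image of t^j. *)
definition Cx :: "nat \<Rightarrow> complex mat" where
  "Cx n = mat n n (\<lambda>(i, j). if i = j + 1 then 1 else 0)"

definition Cy :: "complex poly \<Rightarrow> complex \<Rightarrow> nat \<Rightarrow> complex mat" where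
  "Cy f z n = mat n n (\<lambda>(i, j). if j = i + 1 then z + poly (piter f j) (- z) else 0)"

definition Ch :: "complex poly \<Rightarrow> complex \<Rightarrow> nat \<Rightarrow> complex mat" where
  "Ch f z n = mat n n (\<lambda>(i, j). if i = j then poly (piter f i) (- z) else 0)"

end

theory Submission
  imports Defs
begin

(* In the basis 1, t, ..., t^(n-1), h is diagonal with entries h_i = f^(i)(-z), x shifts t^i to
   t^(i+1), and y shifts t^i back to a_i t^(i-1) with weight a_i = z + h_i. Since f(h_i) = h_(i+1),
   the relations hx = x f(h) and yh = f(h) y hold entrywise, and yx - xy is diagonal with entries
   a_(i+1) - a_i = h_(i+1) - h_i; at the two ends this uses h_0 = -z and a_n = 0.
   Applying x to a nonzero vector until only its lowest nonzero coefficient survives shows that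
   every nonzero submodule contains t^(n-1). From there y walks down to 1 unless some a_i vanishes,
   so the submodule is everything. Conversely, if a_i = 0 for some 0 < i < n, the span of
   t^i, ..., t^(n-1) is a proper nonzero submodule. *)

lemma pow_mat_diag: "mat_diag n d ^\<^sub>m k = mat_diag n (\<lambda>i. d i ^ k)"
proof (induction k)
  case 0
  show ?case by (rule eq_matI) (auto simp: mat_diag_def)
next
  case (Suc k)
  then show ?case by (simp add: power_commutes)
qed

lemma mat_diag_cong: "(\<And>i. i < n \<Longrightarrow> a i = b i) \<Longrightarrow> mat_diag n a = mat_diag n b"
  by (rule eq_matI) (auto simp: mat_diag_def)

lemma diff_mat_diag:
  "mat_diag n a - mat_diag n (b :: nat \<Rightarrow> 'a :: ab_group_add) = mat_diag n (\<lambda>i. a i - b i)"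
  by (rule eq_matI) (auto simp: mat_diag_def)

lemma mat_poly_mat_diag: "mat_poly n p (mat_diag n d) = mat_diag n (\<lambda>i. poly p (d i))"
proof -
  have "foldr (\<lambda>i B. c i \<cdot>\<^sub>m (mat_diag n d ^\<^sub>m i) + B) xs (0\<^sub>m n n)
      = mat_diag n (\<lambda>l. \<Sum>i\<leftarrow>xs. c i * d l ^ i)" for c xs
    by (induction xs) (simp_all add: pow_mat_diag, auto intro!: eq_matI simp: mat_diag_def)
  then show ?thesis
    by (simp add: mat_poly_def poly_altdef atLeast0LessThan lessThan_Suc_atMost
        sum_set_upt_conv_sum_list_nat[symmetric] del: upt_Suc)
qed

lemma Cx_carrier [simp]: "Cx n \<in> carrier_mat n n"
  and Cy_carrier [simp]: "Cy f z n \<in> carrier_mat n n"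
  and Ch_carrier [simp]: "Ch f z n \<in> carrier_mat n n"
  by (simp_all add: Cx_def Cy_def Ch_def)

lemma C_dims [simp]:
  "dim_row (Cx n) = n" "dim_col (Cx n) = n"
  "dim_row (Cy f z n) = n" "dim_col (Cy f z n) = n"
  "dim_row (Ch f z n) = n" "dim_col (Ch f z n) = n"
  by (simp_all add: Cx_def Cy_def Ch_def)

lemma Ch_eq_mat_diag: "Ch f z n = mat_diag n (\<lambda>i. poly (piter f i) (- z))"
  by (rule eq_matI) (auto simp: Ch_def mat_diag_def)

lemma mat_poly_Ch: "mat_poly n f (Ch f z n) = mat_diag n (\<lambda>i. poly (piter f (Suc i)) (- z))"
  by (simp add: Ch_eq_mat_diag mat_poly_mat_diag poly_pcompose)

lemma mult_Cx:
  assumes "A \<in> carrier_mat m n"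
  shows "A * Cx n = mat m n (\<lambda>(i, j). if j + 1 < n then A $$ (i, j + 1) else 0)"
proof -
  have "col (Cx n) j = (if j + 1 < n then unit_vec n (j + 1) else 0\<^sub>v n)" if "j < n" for j
    using that by (intro eq_vecI) (auto simp: Cx_def)
  then show ?thesis
    using assms by (intro eq_matI) auto
qed

lemma row_Cx: "i < n \<Longrightarrow> row (Cx n) i = (if 0 < i then unit_vec n (i - 1) else 0\<^sub>v n)"
  by (rule eq_vecI) (auto simp: Cx_def)

lemma Cx_mult:
  assumes "A \<in> carrier_mat n m"
  shows "Cx n * A = mat n m (\<lambda>(i, j). if 0 < i then A $$ (i - 1, j) else 0)"
  using assms by (intro eq_matI) (auto simp: row_Cx)

lemma Ch_mult_Cx: "Ch f z n * Cx n = Cx n * mat_poly n f (Ch f z n)"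
  unfolding mat_poly_Ch unfolding Ch_eq_mat_diag
  by (rule eq_matI) (auto simp: mat_diag_mult_left[of _ n n] mat_diag_mult_right[of _ n n]
      Cx_def poly_pcompose)

lemma Cy_mult_Ch: "Cy f z n * Ch f z n = mat_poly n f (Ch f z n) * Cy f z n"
  unfolding mat_poly_Ch unfolding Ch_eq_mat_diag
  by (rule eq_matI) (auto simp: mat_diag_mult_left[of _ n n] mat_diag_mult_right[of _ n n]
      Cy_def poly_pcompose)

lemma Cy_mult_Cx:
  "Cy f z n * Cx n = mat_diag n (\<lambda>i. if i + 1 < n then z + poly (piter f (Suc i)) (- z) else 0)"
  by (rule eq_matI) (auto simp: mult_Cx[of _ n n] Cy_def mat_diag_def)

lemma Cx_mult_Cy:
  "Cx n * Cy f z n = mat_diag n (\<lambda>i. if 0 < i then z + poly (piter f i) (- z) else 0)"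
  by (rule eq_matI) (auto simp: Cx_mult[of _ n n] Cy_def mat_diag_def)

lemma Cy_Cx_commutator:
  assumes "z + poly (piter f n) (- z) = 0"
  shows "Cy f z n * Cx n - Cx n * Cy f z n = mat_poly n f (Ch f z n) - Ch f z n"
  unfolding Cy_mult_Cx Cx_mult_Cy mat_poly_Ch unfolding Ch_eq_mat_diag diff_mat_diag
proof (intro mat_diag_cong, goal_cases)
  case (1 i)
  then consider "Suc i < n" | "Suc i = n"
    by linarith
  then show ?case
    using assms by cases (auto simp: poly_pcompose add_eq_0_iff)
qed

lemma C_module_Hf_module:
  assumes "z + poly (piter f n) (- z) = 0"
  shows "Hf_module f n (Cx n) (Cy f z n) (Ch f z n)"
  using assms by (simp add: Hf_module_def Ch_mult_Cx Cy_mult_Ch Cy_Cx_commutator)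

lemma Cx_mult_vec:
  "v \<in> carrier_vec n \<Longrightarrow> Cx n *\<^sub>v v = vec n (\<lambda>i. if 0 < i then v $ (i - 1) else 0)"
  by (rule eq_vecI) (auto simp: row_Cx)

lemma Cx_funpow_mult_vec:
  assumes "v \<in> carrier_vec n"
  shows "((*\<^sub>v) (Cx n) ^^ p) v = vec n (\<lambda>i. if p \<le> i then v $ (i - p) else 0)"
proof (induction p)
  case 0
  show ?case using assms by (intro eq_vecI) auto
next
  case (Suc p)
  then show ?case by (intro eq_vecI) (auto simp: Cx_mult_vec)
qed

lemma Cy_mult_vec:
  assumes "v \<in> carrier_vec n"
  shows "Cy f z n *\<^sub>v v =
    vec n (\<lambda>i. if i + 1 < n then (z + poly (piter f (i + 1)) (- z)) * v $ (i + 1) else 0)"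
proof -
  have "row (Cy f z n) i =
      (if i + 1 < n then (z + poly (piter f (i + 1)) (- z)) \<cdot>\<^sub>v unit_vec n (i + 1) else 0\<^sub>v n)"
    if "i < n" for i
    using that by (intro eq_vecI) (auto simp: Cy_def)
  then show ?thesis
    using assms by (intro eq_vecI) auto
qed

lemma Ch_mult_vec:
  assumes "v \<in> carrier_vec n"
  shows "Ch f z n *\<^sub>v v = vec n (\<lambda>i. poly (piter f i) (- z) * v $ i)"
proof -
  have "row (Ch f z n) i = poly (piter f i) (- z) \<cdot>\<^sub>v unit_vec n i" if "i < n" for i
    using that by (intro eq_vecI) (auto simp: Ch_def)
  then show ?thesis
    using assms by (intro eq_vecI) auto
qed

lemma Cy_mult_unit_vec:
  "0 < j \<Longrightarrow> j < n \<Longrightarrow>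
    Cy f z n *\<^sub>v unit_vec n j = (z + poly (piter f j) (- z)) \<cdot>\<^sub>v unit_vec n (j - 1)"
  by (rule eq_vecI) (auto simp: Cy_mult_vec)

lemma invariant_subspace_funpow:
  "invariant_subspace n X Y H W \<Longrightarrow> w \<in> W \<Longrightarrow> ((*\<^sub>v) X ^^ p) w \<in> W"
  by (induction p) (auto simp: invariant_subspace_def)

lemma invariant_subspace_eq_carrier_vec:
  assumes W: "invariant_subspace n X Y H W" and units: "\<And>j. j < n \<Longrightarrow> unit_vec n j \<in> W"
  shows "W = carrier_vec n"
proof
  show "W \<subseteq> carrier_vec n"
    using W by (simp add: invariant_subspace_def)
  show "carrier_vec n \<subseteq> W"
  proof
    fix v :: "complex vec"
    assume v: "v \<in> carrier_vec n"
    have "vec n (\<lambda>i. if i < m then v $ i else 0) \<in> W" for m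
    proof (induction m)
      case 0
      have "vec n (\<lambda>i. if i < 0 then v $ i else 0) = 0\<^sub>v n"
        by (rule eq_vecI) auto
      then show ?case
        using W by (simp add: invariant_subspace_def)
    next
      case (Suc m)
      show ?case
      proof (cases "m < n")
        case True
        have "vec n (\<lambda>i. if i < Suc m then v $ i else 0)
            = vec n (\<lambda>i. if i < m then v $ i else 0) + v $ m \<cdot>\<^sub>v unit_vec n m"
          using True by (intro eq_vecI) (auto simp: less_Suc_eq)
        then show ?thesis
          using Suc units[OF True] W by (simp add: invariant_subspace_def)
      next
        case False
        then have "vec n (\<lambda>i. if i < Suc m then v $ i else 0)
            = vec n (\<lambda>i. if i < m then v $ i else 0)"
          by (intro eq_vecI) auto
        then show ?thesis
          using Suc by simp
      qed
    qed
    moreover have "vec n (\<lambda>i. if i < n then v $ i else 0) = v"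
      using v by (intro eq_vecI) auto
    ultimately show "v \<in> W"
      by metis
  qed
qed

lemma simple_Hf_moduleD:
  "simple_Hf_module n X Y H \<Longrightarrow> invariant_subspace n X Y H W \<Longrightarrow>
    W = {0\<^sub>v n} \<or> W = carrier_vec n"
  unfolding simple_Hf_module_def by blast

lemma invariant_subspace_Cx_unit_vec_last:
  assumes W: "invariant_subspace n (Cx n) Y H W" and "w \<in> W" "w \<noteq> 0\<^sub>v n"
  shows "unit_vec n (n - 1) \<in> W"
proof -
  have w: "w \<in> carrier_vec n"
    using W \<open>w \<in> W\<close> by (auto simp: invariant_subspace_def)
  with \<open>w \<noteq> 0\<^sub>v n\<close> have "\<exists>k. k < n \<and> w $ k \<noteq> 0"
    by (metis eq_vecI index_zero_vec carrier_vecD)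
  then obtain k where k: "k < n" "w $ k \<noteq> 0" and lowest: "\<And>l. l < k \<Longrightarrow> w $ l = 0"
    by (auto simp: exists_least_iff[of "\<lambda>k. k < n \<and> w $ k \<noteq> 0"])
  have "((*\<^sub>v) (Cx n) ^^ (n - 1 - k)) w = w $ k \<cdot>\<^sub>v unit_vec n (n - 1)"
    using k lowest by (intro eq_vecI) (auto simp: Cx_funpow_mult_vec[OF w])
  then have "(1 / w $ k) \<cdot>\<^sub>v (w $ k \<cdot>\<^sub>v unit_vec n (n - 1)) \<in> W"
    using invariant_subspace_funpow[OF W \<open>w \<in> W\<close>] W by (metis invariant_subspace_def)
  then show ?thesis
    using k by (simp add: smult_smult_assoc)
qed

lemma invariant_subspace_Cy_unit_vec_down:
  assumes W: "invariant_subspace n X (Cy f z n) H W"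
    and weights: "\<forall>i\<in>{1..n-1}. z + poly (piter f i) (- z) \<noteq> 0"
    and top: "unit_vec n (n - 1) \<in> W" and "j < n"
  shows "unit_vec n j \<in> W"
proof -
  from \<open>j < n\<close> have "j \<le> n - 1"
    by simp
  then show ?thesis
  proof (induction rule: inc_induct)
    case base
    show ?case using top .
  next
    case (step m)
    let ?a = "z + poly (piter f (Suc m)) (- z)"
    have "Cy f z n *\<^sub>v unit_vec n (Suc m) = ?a \<cdot>\<^sub>v unit_vec n m"
      using step.hyps by (simp add: Cy_mult_unit_vec)
    then have "(1 / ?a) \<cdot>\<^sub>v (?a \<cdot>\<^sub>v unit_vec n m) \<in> W"
      using step.IH W by (metis invariant_subspace_def)
    moreover have "Suc m \<in> {1..n-1}"
      using step.hyps by simp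
    then have "?a \<noteq> 0"
      using weights by blast
    ultimately show ?case
      by (simp add: smult_smult_assoc)
  qed
qed

lemma C_module_simple:
  assumes "n \<ge> 1" and weights: "\<forall>i\<in>{1..n-1}. z + poly (piter f i) (- z) \<noteq> 0"
  shows "simple_Hf_module n (Cx n) (Cy f z n) (Ch f z n)"
  unfolding simple_Hf_module_def
proof (intro conjI allI impI)
  show "0 < n"
    using assms by simp
  fix W
  assume W: "invariant_subspace n (Cx n) (Cy f z n) (Ch f z n) W"
  have "W = carrier_vec n" if "W \<noteq> {0\<^sub>v n}"
  proof -
    obtain w where "w \<in> W" "w \<noteq> 0\<^sub>v n"
      using W \<open>W \<noteq> {0\<^sub>v n}\<close> by (auto simp: invariant_subspace_def)
    then have top: "unit_vec n (n - 1) \<in> W"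
      using W by (rule invariant_subspace_Cx_unit_vec_last[rotated])
    show "W = carrier_vec n"
      using invariant_subspace_Cy_unit_vec_down[OF W weights top]
      by (rule invariant_subspace_eq_carrier_vec[OF W])
  qed
  then show "W = {0\<^sub>v n} \<or> W = carrier_vec n"
    by blast
qed

lemma invariant_subspace_C_tail:
  assumes "i \<le> n" and "z + poly (piter f i) (- z) = 0"
  shows "invariant_subspace n (Cx n) (Cy f z n) (Ch f z n) {v \<in> carrier_vec n. \<forall>k<i. v $ k = 0}"
  unfolding invariant_subspace_def
proof (intro conjI ballI allI)
  fix u :: "complex vec"
  assume u: "u \<in> {v \<in> carrier_vec n. \<forall>k<i. v $ k = 0}"
  then show "Cx n *\<^sub>v u \<in> {v \<in> carrier_vec n. \<forall>k<i. v $ k = 0}"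
    using assms(1) by (auto simp: Cx_mult_vec)
  show "Ch f z n *\<^sub>v u \<in> {v \<in> carrier_vec n. \<forall>k<i. v $ k = 0}"
    using u assms(1) by (auto simp: Ch_mult_vec)
  have "(z + poly (piter f (k + 1)) (- z)) * u $ (k + 1) = 0" if "k < i" for k
    using u assms(2) that by (cases "k + 1 = i") auto
  then show "Cy f z n *\<^sub>v u \<in> {v \<in> carrier_vec n. \<forall>k<i. v $ k = 0}"
    using u assms(1) by (auto simp: Cy_mult_vec)
qed (use assms(1) in auto)

lemma C_module_not_simple:
  assumes "i \<in> {1..n-1}" and "z + poly (piter f i) (- z) = 0"
  shows "\<not> simple_Hf_module n (Cx n) (Cy f z n) (Ch f z n)"
proof
  let ?W = "{v \<in> carrier_vec n. \<forall>k<i. v $ k = (0 :: complex)}"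
  assume simple: "simple_Hf_module n (Cx n) (Cy f z n) (Ch f z n)"
  have "invariant_subspace n (Cx n) (Cy f z n) (Ch f z n) ?W"
    using assms by (intro invariant_subspace_C_tail) auto
  then have "?W = {0\<^sub>v n} \<or> ?W = carrier_vec n"
    by (rule simple_Hf_moduleD[OF simple])
  moreover have "unit_vec n (n - 1) \<in> ?W" "unit_vec n (n - 1) \<noteq> 0\<^sub>v n"
    using assms(1) by auto
  moreover have "unit_vec n 0 \<notin> ?W"
    using assms(1) by (auto intro!: exI[of _ 0])
  ultimately show False
    by auto
qed

theorem lemma11:
  fixes f :: "complex poly" and n :: nat and z :: complex
  assumes "n \<ge> 1"
    and "z + poly (piter f n) (- z) = 0"
  shows "Hf_module f n (Cx n) (Cy f z n) (Ch f z n)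
    \<and> (simple_Hf_module n (Cx n) (Cy f z n) (Ch f z n) \<longleftrightarrow>
         (\<forall>i\<in>{1..n-1}. z + poly (piter f i) (- z) \<noteq> 0))"
  using C_module_Hf_module[OF assms(2)] C_module_simple[OF assms(1)] C_module_not_simple
  by blast

end
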